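(* Let $\mathcal{P}$ be a discrete minimization problem with $n$ variables and let $\mathcal{M}$ be a relaxed multivalued decision diagram for $\mathcal{P}$, i.e. $Sol(\mathcal{P}) \subseteq Sol(\mathcal{M})$. Let $u$ be an exact node of $\mathcal{M}$, and let $(\underline{u}, \mathcal{M}^* )$ be the output of the peel operation applied to $(\mathcal{M},u)$, where the filter step removes an arc only if no feasible solution of $\mathcal{P}$ corresponds to a path using that arc. Then $$Sol(\mathcal{P}) \subseteq Sol(\mathcal{M}^* ) \cup Sol(\underline{u}).$$
   Context: A multivalued decision diagram (MDD) $\mathcal{M}$ for a problem with variables $x_1,\dots,x_n$ is a directed acyclic graph whose nodes are partitioned into layers $L_1,\dots,L_{n+1}$; $L_1=\{r\}$ (root, no in-arcs), $L_{n+1}=\{t\}$ (terminal, no out-arcs). Every arc goes from a node on layer $i$ to a node on layer $i+1$ and carries a label $l\in D(x_i)$ (meaning $x_i=l$) and a value. $Sol(\mathcal{M})$ is the set of label sequences of $r$–$t$ paths; $Sol(\mathcal{P})$ is the set of feasible assignments. For a node $v$, $All_v^\downarrow$ (resp. $Some_v^\downarrow$) is the set of labels appearing on every (resp. at least one) $r$–$v$ path. A node $v$ is exact if $Some_v^\downarrow=All_v^\downarrow$ and every arc ending at $v$ starts at an exact node. Peel operation on $(\mathcal{M},u)$, $u$ exact: create a new diagram $\underline{u}$; delete all in-arcs of $u$, remove $u$ from $\mathcal{M}$ and make it the root of $\underline{u}$ (its out-arcs still end in $\mathcal{M}$). While some arc starts in $\underline{u}$ and ends in $\mathcal{M}$: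 for each node $m$ of $\mathcal{M}$ having an in-arc originating in $\underline{u}$, create a new node $m'$ on the same layer in $\underline{u}$, redirect every in-arc of $m$ originating in $\underline{u}$ to $m'$, give $m'$ a copy (same label, value, head) of every out-arc of $m$, and apply the filter to the in-arcs of $m'$ and the out-arcs of $m$ and $m'$. Finally, repeatedly delete from $\mathcal{M}$ every node other than $r,t$ with no in-arcs or no out-arcs (with its arcs); the result is $\mathcal{M}^*$. The copy of $t$ in $\underline{u}$ is its terminal $t'$. $Sol(\underline{u})$ denotes the set of label sequences obtained by concatenating the label sequence of some $r$–$u$ path of the original diagram $\mathcal{M}$ with the label sequence of some $u$–$t'$ path of $\underline{u}$. *)

theory Defs
  imports Complex_Main
begin

type_synonym ('v, 'l) arc = "'v \<times> 'l \<times> real \<times> 'v"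

definition src :: "('v, 'l) arc \<Rightarrow> 'v" where "src e = fst e"
definition lbl :: "('v, 'l) arc \<Rightarrow> 'l" where "lbl e = fst (snd e)"
definition val :: "('v, 'l) arc \<Rightarrow> real" where "val e = fst (snd (snd e))"
definition tgt :: "('v, 'l) arc \<Rightarrow> 'v" where "tgt e = snd (snd (snd e))"

inductive apath :: "('v, 'l) arc set \<Rightarrow> 'v \<Rightarrow> ('v, 'l) arc list \<Rightarrow> 'v \<Rightarrow> bool"
  for A where
  apath_Nil: "apath A v [] v"
| apath_Cons: "e \<in> A \<Longrightarrow> src e = v \<Longrightarrow> apath A (tgt e) es w \<Longrightarrow> apath A v (e # es) w"

definition labels :: "('v, 'l) arc list \<Rightarrow> 'l list" where
  "labels es = map lbl es"

definition mdd :: "nat \<Rightarrow> (nat \<Rightarrow> 'l set) \<Rightarrow> 'v set \<Rightarrow> ('v, 'l) arc set \<Rightarrow> ('v \<Rightarrow> nat)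
                    \<Rightarrow> 'v \<Rightarrow> 'v \<Rightarrow> bool" where
  "mdd n D N A lay r t \<longleftrightarrow>
     finite N \<and> finite A \<and> r \<in> N \<and> t \<in> N \<and>
     (\<forall>v\<in>N. 1 \<le> lay v \<and> lay v \<le> n + 1) \<and>
     (\<forall>v\<in>N. lay v = 1 \<longleftrightarrow> v = r) \<and>
     (\<forall>v\<in>N. lay v = n + 1 \<longleftrightarrow> v = t) \<and>
     (\<forall>e\<in>A. src e \<in> N \<and> tgt e \<in> N \<and> lay (tgt e) = lay (src e) + 1 \<and>
             lbl e \<in> D (lay (src e)))"

definition SolMDD :: "('v, 'l) arc set \<Rightarrow> 'v \<Rightarrow> 'v \<Rightarrow> 'l list set" where
  "SolMDD A r t = {labels es | es. apath A r es t}"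

text \<open>A discrete problem with n variables, domains D i (variable x_i, i = 1..n),
  and feasible set solP (assignments as lists, x_i = xs ! (i-1)).\<close>
definition discrete_problem :: "nat \<Rightarrow> (nat \<Rightarrow> 'l set) \<Rightarrow> 'l list set \<Rightarrow> bool" where
  "discrete_problem n D solP \<longleftrightarrow>
     (\<forall>i\<in>{1..n}. finite (D i)) \<and>
     (\<forall>xs\<in>solP. length xs = n \<and> (\<forall>i<n. xs ! i \<in> D (i + 1)))"

definition Some_down :: "('v, 'l) arc set \<Rightarrow> 'v \<Rightarrow> 'v \<Rightarrow> 'l set" where
  "Some_down A r v = \<Union> {set (labels es) | es. apath A r es v}"

definition All_down :: "('v, 'l) arc set \<Rightarrow> 'v \<Rightarrow> 'v \<Rightarrow> 'l set" where
  "All_down A r v = \<Inter> {set (labels es) | es. apath A r es v}"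

inductive exact_node :: "('v, 'l) arc set \<Rightarrow> 'v \<Rightarrow> 'v \<Rightarrow> bool" for A r where
  "Some_down A r v = All_down A r v \<Longrightarrow>
   (\<forall>e\<in>A. tgt e = v \<longrightarrow> exact_node A r (src e)) \<Longrightarrow> exact_node A r v"

text \<open>During the peel operation the nodes of M are represented as Inl m and
  the nodes of the new diagram (u and the copies m') as Inr m.
  All arcs of both diagrams are kept in one arc set B.\<close>

definition crossing :: "('n + 'n, 'l) arc \<Rightarrow> bool" where
  "crossing e \<longleftrightarrow> (\<exists>a b. src e = Inr a \<and> tgt e = Inl b)"

text \<open>A feasible solution x corresponds to a path using arc e in the current state B:
  either an r-t path of M, or an r-u path of the original diagram followed by a path
  of the new diagram starting at u and ending at t (in M) or at t' (its copy).\<close>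
definition feasible_through ::
  "'l list set \<Rightarrow> ('n, 'l) arc set \<Rightarrow> 'n \<Rightarrow> 'n \<Rightarrow> 'n
     \<Rightarrow> ('n + 'n, 'l) arc set \<Rightarrow> ('n + 'n, 'l) arc \<Rightarrow> bool" where
  "feasible_through solP A r t u B e \<longleftrightarrow>
     (\<exists>x\<in>solP.
        (\<exists>es. apath B (Inl r) es (Inl t) \<and> e \<in> set es \<and> labels es = x) \<or>
        (\<exists>p es z. apath A r p u \<and> apath B (Inr u) es z \<and> (z = Inl t \<or> z = Inr t) \<and>
                  e \<in> set es \<and> labels p @ labels es = x))"

inductive filter_step ::
  "'l list set \<Rightarrow> ('n, 'l) arc set \<Rightarrow> 'n \<Rightarrow> 'n \<Rightarrow> 'n \<Rightarrow> ('n + 'n, 'l) arc set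
     \<Rightarrow> ('n + 'n, 'l) arc set \<Rightarrow> ('n + 'n, 'l) arc set \<Rightarrow> bool"
  for solP A r t u C where
  "e \<in> B \<Longrightarrow> e \<in> C \<Longrightarrow> \<not> feasible_through solP A r t u B e \<Longrightarrow>
   filter_step solP A r t u C B (B - {e})"

text \<open>Initial state: in-arcs of u deleted, u moved to the new diagram as its root.\<close>
definition peel_init :: "('n, 'l) arc set \<Rightarrow> 'n \<Rightarrow> ('n + 'n, 'l) arc set" where
  "peel_init A u =
     {(Inl a, l, c, Inl b) | a l c b. (a, l, c, b) \<in> A \<and> a \<noteq> u \<and> b \<noteq> u} \<union>
     {(Inr u, l, c, Inl b) | l c b. (u, l, c, b) \<in> A \<and> b \<noteq> u}"

inductive peel_iter ::
  "'l list set \<Rightarrow> ('n, 'l) arc set \<Rightarrow> 'n \<Rightarrow> 'n \<Rightarrow> 'n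
     \<Rightarrow> 'n set \<times> ('n + 'n, 'l) arc set \<Rightarrow> 'n set \<times> ('n + 'n, 'l) arc set \<Rightarrow> bool"
  for solP A r t u where
  "X = {m. \<exists>e\<in>B. crossing e \<and> tgt e = Inl m} \<Longrightarrow> X \<noteq> {} \<Longrightarrow>
   B1 = {e \<in> B. \<not> crossing e}
        \<union> {(src e, lbl e, val e, Inr m) | e m. e \<in> B \<and> crossing e \<and> tgt e = Inl m}
        \<union> {(Inr m, lbl e, val e, tgt e) | e m. e \<in> B \<and> m \<in> X \<and> src e = Inl m} \<Longrightarrow>
   C = {e. \<exists>m\<in>X. tgt e = Inr m \<or> src e = Inl m \<or> src e = Inr m} \<Longrightarrow>
   (filter_step solP A r t u C)\<^sup>*\<^sup>* B1 B2 \<Longrightarrow>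
   peel_iter solP A r t u (U, B) (U \<union> X, B2)"

inductive prune_step ::
  "'n \<Rightarrow> 'n \<Rightarrow> 'n set \<times> ('n + 'n, 'l) arc set \<Rightarrow> 'n set \<times> ('n + 'n, 'l) arc set \<Rightarrow> bool"
  for r t where
  "v \<in> MN \<Longrightarrow> v \<noteq> r \<Longrightarrow> v \<noteq> t \<Longrightarrow>
   (\<not> (\<exists>e\<in>B. tgt e = Inl v) \<or> \<not> (\<exists>e\<in>B. src e = Inl v)) \<Longrightarrow>
   prune_step r t (MN, B) (MN - {v}, {e \<in> B. src e \<noteq> Inl v \<and> tgt e \<noteq> Inl v})"

text \<open>peel solP A N r t u U MN B: (U, MN, B) is a possible outcome of peeling (M, u):
  U are the nodes of the new diagram (as copies Inr m), MN the nodes of M*,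
  and B the arcs (Inl-Inl arcs form M*, Inr-Inr arcs form the new diagram).\<close>
definition peel ::
  "'l list set \<Rightarrow> ('n, 'l) arc set \<Rightarrow> 'n set \<Rightarrow> 'n \<Rightarrow> 'n \<Rightarrow> 'n
     \<Rightarrow> 'n set \<Rightarrow> 'n set \<Rightarrow> ('n + 'n, 'l) arc set \<Rightarrow> bool" where
  "peel solP A N r t u U MN B \<longleftrightarrow>
     (\<exists>B1. (peel_iter solP A r t u)\<^sup>*\<^sup>* ({u}, peel_init A u) (U, B1) \<and>
           (\<forall>e\<in>B1. \<not> crossing e) \<and>
           (prune_step r t)\<^sup>*\<^sup>* (N - {u}, B1) (MN, B) \<and>
           \<not> (\<exists>s. prune_step r t (MN, B) s))"

text \<open>Sol(M*): r-t paths of M* (empty if r was removed, i.e. u = r).\<close>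
definition SolMstar :: "'n \<Rightarrow> 'n \<Rightarrow> 'n set \<Rightarrow> ('n + 'n, 'l) arc set \<Rightarrow> 'l list set" where
  "SolMstar r t MN B = {labels es | es. r \<in> MN \<and> apath B (Inl r) es (Inl t)}"

definition SolU :: "('n, 'l) arc set \<Rightarrow> 'n \<Rightarrow> 'n \<Rightarrow> 'n \<Rightarrow> ('n + 'n, 'l) arc set \<Rightarrow> 'l list set" where
  "SolU A r t u B = {labels p @ labels es | p es. apath A r p u \<and> apath B (Inr u) es (Inr t)}"

end

theory Submission
  imports Defs
begin

text \<open>Every feasible solution keeps, throughout the peel operation, a witness path in the
  current arc set: either an r-t path of M, or an r-u path of the original diagram followed by
  a path of the new diagram from u to t or t'. The filter only deletes arcs lying on no such
  witness, and pruning only deletes nodes that lie on no path at all, so both keep every witness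
  intact. Redirecting a crossing arc to the copy m' and duplicating the out-arcs of m turns a
  witness that crosses into M into one that follows the copies instead, with the same labels.
  Since arcs never lead from M back to the new diagram, a witness that starts in the new
  diagram ends at t' once no crossing arcs remain.\<close>

lemma apath_Nil_iff [simp]: "apath A v [] w \<longleftrightarrow> v = w"
  by (auto intro: apath.intros elim: apath.cases)

lemma apath_Cons_iff [simp]:
  "apath A v (e # es) w \<longleftrightarrow> e \<in> A \<and> src e = v \<and> apath A (tgt e) es w"
  by (auto intro: apath.intros elim: apath.cases)

lemma labels_simps [simp]:
  "labels [] = []" "labels (e # es) = lbl e # labels es"
  "labels (es @ es') = labels es @ labels es'"
  by (simp_all add: labels_def)

lemma arc_sel_simps [simp]:
  "src (a, l, c, b) = a" "lbl (a, l, c, b) = l" "val (a, l, c, b) = c" "tgt (a, l, c, b) = b"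
  by (simp_all add: src_def lbl_def val_def tgt_def)

lemma apath_subset: "apath A v es w \<Longrightarrow> set es \<subseteq> A"
  by (induction rule: apath.induct) auto

lemma apath_mono: "apath A v es w \<Longrightarrow> set es \<subseteq> A' \<Longrightarrow> apath A' v es w"
  by (induction rule: apath.induct) auto

lemma apath_src_linked:
  "apath A v es w \<Longrightarrow> e \<in> set es \<Longrightarrow> src e = v \<or> (\<exists>e'\<in>set es. tgt e' = src e)"
  by (induction rule: apath.induct) auto

lemma apath_tgt_linked:
  "apath A v es w \<Longrightarrow> e \<in> set es \<Longrightarrow> tgt e = w \<or> (\<exists>e'\<in>set es. src e' = tgt e)"
proof (induction rule: apath.induct)
  case (apath_Cons e' v es w)
  then show ?case by (cases es) auto
qed simp

lemma apath_avoids_src: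
  assumes "apath A v es w" "v \<noteq> u" "\<forall>e\<in>set es. tgt e \<noteq> u"
  shows "\<forall>e\<in>set es. src e \<noteq> u"
  using apath_src_linked[OF assms(1)] assms(2,3) by metis

lemma apath_split_last_visit:
  "apath A v es w \<Longrightarrow> (v \<noteq> u \<and> (\<forall>e\<in>set es. tgt e \<noteq> u)) \<or>
     (\<exists>p q. es = p @ q \<and> apath A v p u \<and> apath A u q w \<and> (\<forall>e\<in>set q. tgt e \<noteq> u))"
proof (induction rule: apath.induct)
  case (apath_Cons e v es w)
  show ?case
  proof (cases "\<exists>p q. es = p @ q \<and> apath A (tgt e) p u \<and> apath A u q w \<and> (\<forall>e\<in>set q. tgt e \<noteq> u)")
    case True
    then obtain p q where "es = p @ q" "apath A (tgt e) p u" "apath A u q w" "\<forall>e\<in>set q. tgt e \<noteq> u"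
      by blast
    with apath_Cons show ?thesis
      by (intro disjI2 exI[of _ "e # p"] exI[of _ q]) auto
  next
    case False
    with apath_Cons have "\<forall>e'\<in>set (e # es). tgt e' \<noteq> u" by auto
    show ?thesis
    proof (cases "v = u")
      case True
      with apath_Cons \<open>\<forall>e'\<in>set (e # es). tgt e' \<noteq> u\<close> show ?thesis
        by (intro disjI2 exI[of _ "[]"] exI[of _ "e # es"]) auto
    qed (use \<open>\<forall>e'\<in>set (e # es). tgt e' \<noteq> u\<close> in auto)
  qed
qed auto

lemma apath_avoids_deleted_node:
  assumes path: "apath B v es w" and "v \<noteq> x" "w \<noteq> x"
    and isolated: "\<not> (\<exists>e\<in>B. tgt e = x) \<or> \<not> (\<exists>e\<in>B. src e = x)"
  shows "set es \<subseteq> {e \<in> B. src e \<noteq> x \<and> tgt e \<noteq> x}"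
proof
  fix e assume e: "e \<in> set es"
  have sub: "set es \<subseteq> B" using apath_subset[OF path] .
  have "src e \<noteq> x"
    using apath_src_linked[OF path e] \<open>v \<noteq> x\<close> isolated e sub by blast
  moreover have "tgt e \<noteq> x"
    using apath_tgt_linked[OF path e] \<open>w \<noteq> x\<close> isolated e sub by blast
  ultimately show "e \<in> {e \<in> B. src e \<noteq> x \<and> tgt e \<noteq> x}" using e sub by blast
qed

subsection \<open>Witness paths\<close>

text \<open>The paths over which feasible_through quantifies.\<close>

definition witness_path ::
  "('n, 'l) arc set \<Rightarrow> 'n \<Rightarrow> 'n \<Rightarrow> 'n \<Rightarrow> ('n + 'n, 'l) arc set \<Rightarrow> 'l list
     \<Rightarrow> ('n + 'n, 'l) arc list \<Rightarrow> bool" where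
  "witness_path A r t u B x es \<longleftrightarrow>
     (apath B (Inl r) es (Inl t) \<and> labels es = x) \<or>
     (\<exists>p z. apath A r p u \<and> apath B (Inr u) es z \<and> (z = Inl t \<or> z = Inr t) \<and> labels p @ labels es = x)"

lemma feasible_through_iff:
  "feasible_through solP A r t u B e \<longleftrightarrow> (\<exists>x\<in>solP. \<exists>es. witness_path A r t u B x es \<and> e \<in> set es)"
  unfolding feasible_through_def witness_path_def by blast

lemma witness_path_mono:
  "witness_path A r t u B x es \<Longrightarrow> set es \<subseteq> B' \<Longrightarrow> witness_path A r t u B' x es"
  unfolding witness_path_def using apath_mono by metis

lemma witness_path_subset: "witness_path A r t u B x es \<Longrightarrow> set es \<subseteq> B"
  unfolding witness_path_def using apath_subset by metis

definition represented ::
  "('n, 'l) arc set \<Rightarrow> 'n \<Rightarrow> 'n \<Rightarrow> 'n \<Rightarrow> ('n + 'n, 'l) arc set \<Rightarrow> 'l list set" where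
  "represented A r t u B = {x. \<exists>es. witness_path A r t u B x es}"

definition peel_invariant :: "'n \<Rightarrow> ('n + 'n, 'l) arc set \<Rightarrow> bool" where
  "peel_invariant u B \<longleftrightarrow>
     (\<forall>e\<in>B. (\<nexists>a b. src e = Inl a \<and> tgt e = Inr b) \<and> src e \<noteq> Inl u \<and> tgt e \<noteq> Inl u)"

lemma peel_invariant_subset: "peel_invariant u B \<Longrightarrow> B' \<subseteq> B \<Longrightarrow> peel_invariant u B'"
  unfolding peel_invariant_def by blast

lemma apath_from_Inl_no_crossing:
  assumes "peel_invariant u B" "apath B (Inl a) es w"
  shows "\<forall>e\<in>set es. \<not> crossing e"
  using assms(2)
proof (induction "Inl a :: 'a + 'a" es w arbitrary: a rule: apath.induct)
  case (apath_Cons e es w)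
  then obtain b where "tgt e = Inl b"
    using assms(1) unfolding peel_invariant_def by (cases "tgt e") auto
  with apath_Cons show ?case by (auto simp: crossing_def)
qed simp

lemma apath_Inr_to_Inl_crossing:
  "apath B v es w \<Longrightarrow> v = Inr a \<Longrightarrow> w = Inl b \<Longrightarrow> \<exists>e\<in>set es. crossing e"
proof (induction arbitrary: a rule: apath.induct)
  case (apath_Cons e v es w)
  then show ?case by (cases "tgt e") (auto simp: crossing_def)
qed simp

subsection \<open>The peel operation preserves witnesses\<close>

definition inl_arc :: "('n, 'l) arc \<Rightarrow> ('n + 'n, 'l) arc" where
  "inl_arc e = (Inl (src e), lbl e, val e, Inl (tgt e))"

lemma labels_map_inl_arc [simp]: "labels (map inl_arc es) = labels es"
  by (simp add: labels_def inl_arc_def)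

lemma apath_map_inl_arc_peel_init:
  "apath A v es w \<Longrightarrow> \<forall>e\<in>set es. src e \<noteq> u \<and> tgt e \<noteq> u \<Longrightarrow>
   apath (peel_init A u) (Inl v) (map inl_arc es) (Inl w)"
proof (induction rule: apath.induct)
  case (apath_Cons e v es w)
  obtain a l c b where "e = (a, l, c, b)" by (cases e)
  with apath_Cons have "inl_arc e \<in> peel_init A u"
    unfolding peel_init_def inl_arc_def by auto
  with apath_Cons show ?case by (simp add: inl_arc_def)
qed simp

lemma peel_invariant_peel_init: "peel_invariant u (peel_init A u)"
  unfolding peel_invariant_def peel_init_def by auto

lemma SolMDD_subset_represented_peel_init:
  "SolMDD A r t \<subseteq> represented A r t u (peel_init A u)"
proof
  fix x assume "x \<in> SolMDD A r t"
  then obtain es where path: "apath A r es t" and x: "x = labels es"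
    unfolding SolMDD_def by blast
  from apath_split_last_visit[OF path, of u]
  show "x \<in> represented A r t u (peel_init A u)"
  proof
    assume "r \<noteq> u \<and> (\<forall>e\<in>set es. tgt e \<noteq> u)"
    with apath_avoids_src[OF path]
    have "apath (peel_init A u) (Inl r) (map inl_arc es) (Inl t)"
      by (intro apath_map_inl_arc_peel_init[OF path]) auto
    with x show ?thesis unfolding represented_def witness_path_def by auto
  next
    assume "\<exists>p q. es = p @ q \<and> apath A r p u \<and> apath A u q t \<and> (\<forall>e\<in>set q. tgt e \<noteq> u)"
    then obtain p q where split: "es = p @ q" and p: "apath A r p u" and q: "apath A u q t"
      and q_avoids: "\<forall>e\<in>set q. tgt e \<noteq> u"
      by blast
    show ?thesis
    proof (cases q)
      case Nil
      with q p split x show ?thesis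
        unfolding represented_def witness_path_def
        by (intro CollectI exI[of _ "[]"] disjI2 exI[of _ p] exI[of _ "Inr t"]) auto
    next
      case (Cons e q')
      obtain l c b where e: "e = (u, l, c, b)" and "e \<in> A" and q': "apath A b q' t" and "b \<noteq> u"
        using q q_avoids Cons by (cases e) auto
      moreover have "\<forall>e\<in>set q'. src e \<noteq> u \<and> tgt e \<noteq> u"
        using apath_avoids_src[OF q'] \<open>b \<noteq> u\<close> q_avoids Cons by auto
      ultimately have "apath (peel_init A u) (Inr u) ((Inr u, l, c, Inl b) # map inl_arc q') (Inl t)"
        using apath_map_inl_arc_peel_init[OF q'] unfolding peel_init_def by auto
      with p split x Cons e show ?thesis
        unfolding represented_def witness_path_def
        by (intro CollectI exI[of _ "(Inr u, l, c, Inl b) # map inl_arc q'"] disjI2 exI[of _ p] exI[of _ "Inl t"])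
           auto
    qed
  qed
qed

lemma filter_step_subset: "filter_step solP A r t u C B B' \<Longrightarrow> B' \<subseteq> B"
  by (auto elim: filter_step.cases)

lemma witness_path_filter_step:
  assumes step: "filter_step solP A r t u C B B'" and "x \<in> solP"
    and witness: "witness_path A r t u B x es"
  shows "witness_path A r t u B' x es"
  using step
proof cases
  case (1 e)
  then have "\<not> feasible_through solP A r t u B e" by simp
  with \<open>x \<in> solP\<close> witness have "e \<notin> set es"
    unfolding feasible_through_iff by blast
  with 1 witness_path_subset[OF witness] have "set es \<subseteq> B'" by auto
  with witness show ?thesis by (rule witness_path_mono)
qed

lemma filter_steps_preserve_represented:
  "(filter_step solP A r t u C)\<^sup>*\<^sup>* B B' \<Longrightarrow> solP \<subseteq> represented A r t u B \<Longrightarrow>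
   solP \<subseteq> represented A r t u B'"
proof (induction rule: rtranclp_induct)
  case (step B1 B2)
  show ?case
  proof
    fix x assume x: "x \<in> solP"
    with step.IH step.prems obtain es where "witness_path A r t u B1 x es"
      unfolding represented_def by blast
    from witness_path_filter_step[OF step.hyps(2) x this] show "x \<in> represented A r t u B2"
      unfolding represented_def by blast
  qed
qed

lemma filter_steps_subset: "(filter_step solP A r t u C)\<^sup>*\<^sup>* B B' \<Longrightarrow> B' \<subseteq> B"
  by (induction rule: rtranclp_induct) (blast dest: filter_step_subset)+

lemma witness_path_prune_step:
  assumes step: "prune_step r t (MN, B) (MN', B')" and witness: "witness_path A r t u B x es"
  shows "witness_path A r t u B' x es"
  using step
proof cases
  case (1 v)
  have "set es \<subseteq> B'"
  proof (cases "apath B (Inl r) es (Inl t)")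
    case True
    with 1 show ?thesis using apath_avoids_deleted_node[of B "Inl r" es "Inl t" "Inl v"] by auto
  next
    case False
    with witness obtain z where "apath B (Inr u) es z" "z = Inl t \<or> z = Inr t"
      unfolding witness_path_def by blast
    with 1 show ?thesis using apath_avoids_deleted_node[of B "Inr u" es z "Inl v"] by auto
  qed
  with witness show ?thesis by (rule witness_path_mono)
qed

lemma prune_step_preserves:
  assumes "prune_step r t (MN, B) (MN', B')"
  shows "represented A r t u B \<subseteq> represented A r t u B' \<and> B' \<subseteq> B \<and> (r \<in> MN \<longrightarrow> r \<in> MN')"
proof -
  have "represented A r t u B \<subseteq> represented A r t u B'"
    unfolding represented_def using witness_path_prune_step[OF assms] by blast
  moreover have "B' \<subseteq> B \<and> (r \<in> MN \<longrightarrow> r \<in> MN')"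
    using assms by (cases rule: prune_step.cases) auto
  ultimately show ?thesis by blast
qed

lemma prune_steps_preserve:
  "(prune_step r t)\<^sup>*\<^sup>* s s' \<Longrightarrow>
   represented A r t u (snd s) \<subseteq> represented A r t u (snd s') \<and> snd s' \<subseteq> snd s \<and>
   (r \<in> fst s \<longrightarrow> r \<in> fst s')"
proof (induction rule: rtranclp_induct)
  case (step s1 s2)
  then have "prune_step r t (fst s1, snd s1) (fst s2, snd s2)" by simp
  from prune_step_preserves[OF this, of A u] step.IH show ?case by blast
qed simp

text \<open>The arc set produced by one pass of the while loop, before the filter is applied.\<close>

definition crossing_targets :: "('n + 'n, 'l) arc set \<Rightarrow> 'n set" where
  "crossing_targets B = {m. \<exists>e\<in>B. crossing e \<and> tgt e = Inl m}"

definition peel_copy :: "('n + 'n, 'l) arc set \<Rightarrow> ('n + 'n, 'l) arc set" where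
  "peel_copy B = {e \<in> B. \<not> crossing e}
     \<union> {(src e, lbl e, val e, Inr m) | e m. e \<in> B \<and> crossing e \<and> tgt e = Inl m}
     \<union> {(Inr m, lbl e, val e, tgt e) | e m. e \<in> B \<and> m \<in> crossing_targets B \<and> src e = Inl m}"

lemma peel_invariant_peel_copy: "peel_invariant u B \<Longrightarrow> peel_invariant u (peel_copy B)"
  unfolding peel_invariant_def peel_copy_def crossing_def by auto

lemma apath_Inl_peel_copy:
  assumes "peel_invariant u B" "apath B (Inl a) es w"
  shows "apath (peel_copy B) (Inl a) es w"
proof (rule apath_mono[OF assms(2)])
  show "set es \<subseteq> peel_copy B"
    using apath_from_Inl_no_crossing[OF assms] apath_subset[OF assms(2)]
    unfolding peel_copy_def by blast
qed

lemma apath_peel_copy_redirect: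
  fixes B :: "('n + 'n, 'l) arc set"
  assumes inv: "peel_invariant u B" and e: "e \<in> B" "crossing e"
    and path: "apath B (tgt e) es z" and z: "z = Inl t \<or> z = Inr t"
  shows "\<exists>es' z'. apath (peel_copy B) (src e) es' z' \<and> (z' = Inl t \<or> z' = Inr t) \<and>
    labels es' = labels (e # es)"
proof -
  obtain m where m: "tgt e = Inl m" using e by (auto simp: crossing_def)
  with e have "m \<in> crossing_targets B" by (auto simp: crossing_targets_def)
  define e1 :: "('n + 'n, 'l) arc" where "e1 = (src e, lbl e, val e, Inr m)"
  have e1: "e1 \<in> peel_copy B" using e m unfolding e1_def peel_copy_def by blast
  show ?thesis
  proof (cases es)
    case Nil
    with path z m have "m = t" by auto
    with e1 Nil show ?thesis
      by (intro exI[of _ "[e1]"] exI[of _ "Inr t"]) (auto simp: e1_def)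
  next
    case (Cons e2 es2)
    with path m have e2: "e2 \<in> B" "src e2 = Inl m" and es2: "apath B (tgt e2) es2 z"
      by auto
    obtain b where b: "tgt e2 = Inl b"
      using inv e2 unfolding peel_invariant_def by (cases "tgt e2") auto
    define e3 :: "('n + 'n, 'l) arc" where "e3 = (Inr m, lbl e2, val e2, tgt e2)"
    have e3: "e3 \<in> peel_copy B"
      using e2 \<open>m \<in> crossing_targets B\<close> unfolding e3_def peel_copy_def by blast
    have "apath (peel_copy B) (tgt e2) es2 z"
      using apath_Inl_peel_copy[OF inv] es2 b by simp
    with e1 e3 z Cons show ?thesis
      by (intro exI[of _ "e1 # e3 # es2"] exI[of _ z]) (auto simp: e1_def e3_def)
  qed
qed

lemma apath_Inr_peel_copy:
  fixes B :: "('n + 'n, 'l) arc set"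
  assumes inv: "peel_invariant u B"
  shows "apath B (Inr a) es z \<Longrightarrow> z = Inl t \<or> z = Inr t \<Longrightarrow>
    \<exists>es' z'. apath (peel_copy B) (Inr a) es' z' \<and> (z' = Inl t \<or> z' = Inr t) \<and> labels es' = labels es"
proof (induction "Inr a :: 'n + 'n" es z arbitrary: a rule: apath.induct)
  case apath_Nil
  then show ?case by (intro exI[of _ "[]"]) auto
next
  case (apath_Cons e es z)
  show ?case
  proof (cases "crossing e")
    case True
    from apath_peel_copy_redirect[OF inv _ True] apath_Cons show ?thesis by simp
  next
    case False
    with apath_Cons obtain b where "tgt e = Inr b" by (cases "tgt e") (auto simp: crossing_def)
    with apath_Cons obtain es' z' where "apath (peel_copy B) (tgt e) es' z'"
      "z' = Inl t \<or> z' = Inr t" "labels es' = labels es"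
      by metis
    moreover have "e \<in> peel_copy B" using apath_Cons False unfolding peel_copy_def by blast
    ultimately show ?thesis using apath_Cons
      by (intro exI[of _ "e # es'"] exI[of _ z']) auto
  qed
qed

lemma represented_peel_copy:
  assumes "peel_invariant u B"
  shows "represented A r t u B \<subseteq> represented A r t u (peel_copy B)"
proof
  fix x assume "x \<in> represented A r t u B"
  then obtain es where "witness_path A r t u B x es" unfolding represented_def by blast
  then consider "apath B (Inl r) es (Inl t)" "labels es = x"
    | p z where "apath A r p u" "apath B (Inr u) es z" "z = Inl t \<or> z = Inr t" "labels p @ labels es = x"
    unfolding witness_path_def by blast
  then show "x \<in> represented A r t u (peel_copy B)"
  proof cases
    case 1
    then have "witness_path A r t u (peel_copy B) x es"
      unfolding witness_path_def using apath_Inl_peel_copy[OF assms] by blast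
    then show ?thesis unfolding represented_def by blast
  next
    case (2 p z)
    obtain es' z' where "apath (peel_copy B) (Inr u) es' z'"
      "z' = Inl t \<or> z' = Inr t" "labels es' = labels es"
      using apath_Inr_peel_copy[OF assms 2(2,3)] by blast
    with 2 have "witness_path A r t u (peel_copy B) x es'"
      unfolding witness_path_def by auto
    then show ?thesis unfolding represented_def by blast
  qed
qed

lemma peel_iter_preserves:
  assumes "peel_iter solP A r t u (U, B) (U', B')"
    and inv: "peel_invariant u B" and rep: "solP \<subseteq> represented A r t u B"
  shows "peel_invariant u B' \<and> solP \<subseteq> represented A r t u B'"
proof -
  obtain C where filters: "(filter_step solP A r t u C)\<^sup>*\<^sup>* (peel_copy B) B'"
    using assms(1) by (cases rule: peel_iter.cases) (simp add: peel_copy_def crossing_targets_def)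
  have "peel_invariant u (peel_copy B)"
    using inv by (rule peel_invariant_peel_copy)
  then have "peel_invariant u B'"
    using filter_steps_subset[OF filters] by (rule peel_invariant_subset)
  moreover have "solP \<subseteq> represented A r t u B'"
    using filter_steps_preserve_represented[OF filters]
      order_trans[OF rep represented_peel_copy[OF inv]] by blast
  ultimately show ?thesis ..
qed

lemma peel_iters_preserve:
  "(peel_iter solP A r t u)\<^sup>*\<^sup>* s s' \<Longrightarrow>
   peel_invariant u (snd s) \<and> solP \<subseteq> represented A r t u (snd s) \<Longrightarrow>
   peel_invariant u (snd s') \<and> solP \<subseteq> represented A r t u (snd s')"
proof (induction rule: rtranclp_induct)
  case (step s1 s2)
  then have "peel_iter solP A r t u (fst s1, snd s1) (fst s2, snd s2)" by simp
  from peel_iter_preserves[OF this] step.IH step.prems show ?case by blast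
qed

lemma represented_subset_solutions:
  assumes no_crossing: "\<forall>e\<in>B. \<not> crossing e" and inv: "peel_invariant u B"
    and root: "r \<noteq> u \<Longrightarrow> r \<in> MN"
  shows "represented A r t u B \<subseteq> SolMstar r t MN B \<union> SolU A r t u B"
proof
  fix x assume "x \<in> represented A r t u B"
  then obtain es where "witness_path A r t u B x es" unfolding represented_def by blast
  then consider "apath B (Inl r) es (Inl t)" "labels es = x"
    | p z where "apath A r p u" "apath B (Inr u) es z" "z = Inl t \<or> z = Inr t" "labels p @ labels es = x"
    unfolding witness_path_def by blast
  then show "x \<in> SolMstar r t MN B \<union> SolU A r t u B"
  proof cases
    case 1
    show ?thesis
    proof (cases "r = u")
      case False
      with 1 root show ?thesis unfolding SolMstar_def by blast
    next
      case True
      have "es = []"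
      proof (rule ccontr)
        assume "es \<noteq> []"
        then obtain e es' where "es = e # es'" by (cases es) auto
        with 1 True inv show False unfolding peel_invariant_def by auto
      qed
      with 1 True have "x = labels [] @ labels []" "apath A r [] u" "apath B (Inr u) [] (Inr t)"
        by auto
      then show ?thesis unfolding SolU_def by blast
    qed
  next
    case (2 p z)
    have "z \<noteq> Inl t"
      using apath_Inr_to_Inl_crossing[OF 2(2)] apath_subset[OF 2(2)] no_crossing by blast
    with 2 show ?thesis unfolding SolU_def by blast
  qed
qed

theorem mainTheorem1:
  fixes n :: nat and D :: "nat \<Rightarrow> 'l set" and solP :: "'l list set"
    and N :: "'n set" and A :: "('n, 'l) arc set" and lay :: "'n \<Rightarrow> nat"
    and r t u :: 'n and U MN :: "'n set" and B :: "('n + 'n, 'l) arc set"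
  assumes "discrete_problem n D solP"
    and "mdd n D N A lay r t"
    and "solP \<subseteq> SolMDD A r t"
    and "u \<in> N"
    and "exact_node A r u"
    and "peel solP A N r t u U MN B"
  shows "solP \<subseteq> SolMstar r t MN B \<union> SolU A r t u B"
proof -
  obtain B1 where iters: "(peel_iter solP A r t u)\<^sup>*\<^sup>* ({u}, peel_init A u) (U, B1)"
    and no_crossing: "\<forall>e\<in>B1. \<not> crossing e"
    and prunes: "(prune_step r t)\<^sup>*\<^sup>* (N - {u}, B1) (MN, B)"
    using assms(6) unfolding peel_def by blast
  have "solP \<subseteq> represented A r t u (peel_init A u)"
    using order_trans[OF assms(3) SolMDD_subset_represented_peel_init] .
  with peel_iters_preserve[OF iters] peel_invariant_peel_init[of u A]
  have inv: "peel_invariant u B1" and represented_B1: "solP \<subseteq> represented A r t u B1"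
    by simp_all
  have "r \<in> N" using assms(2) unfolding mdd_def by blast
  with prune_steps_preserve[OF prunes, of A u]
  have represented_B: "represented A r t u B1 \<subseteq> represented A r t u B"
    and "B \<subseteq> B1" and root: "r \<noteq> u \<Longrightarrow> r \<in> MN"
    by simp_all
  with no_crossing inv have "represented A r t u B \<subseteq> SolMstar r t MN B \<union> SolU A r t u B"
    by (intro represented_subset_solutions root) (auto intro: peel_invariant_subset)
  with represented_B1 represented_B show ?thesis by (rule order_trans[OF order_trans])
qed

end
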